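(* Let $n,m\in\mathbb{N}$, $f,g\in C[0,1]$, and $I_{n,m}(f)=\int_0^1\overline{B}_{n,m}(f;x)\,dx$. Then $$ \left|I_{n,m}(fg)-I_{n,m}(f)I_{n,m}(g)\right|\le\frac14\,\widetilde{\omega}\left(f;2\sqrt{\frac1{12}+\frac1{6m^2n}}\right)\widetilde{\omega}\left(g;2\sqrt{\frac1{12}+\frac1{6m^2n}}\right). $$
   Context: $\overline{B}_{n,m}(f;x)=B_n^{[\frac{k-1}{m},\frac km]}(f;x)$ for $x\in\left[\frac{k-1}{m},\frac km\right]$, $1\le k\le m$, where $B_n^{[a,b]}(f;x)=\frac{1}{(b-a)^n}\sum_{i=0}^n\binom ni(x-a)^i(b-x)^{n-i}f(a+i\frac{b-a}{n})$; equivalently $I_{n,m}(f)=\frac{1}{m(n+1)}\sum_{k=1}^m\sum_{i=0}^nf\left(\frac{kn-n+i}{mn}\right)$. For $f\in C[0,1]$, $\omega(f;t)=\sup\{|f(x)-f(y)|:x,y\in[0,1],|x-y|\le t\}$, and $\widetilde{\omega}(f;t)=\sup_{0\le x\le t\le y\le1,\,x\ne y}\frac{(t-x)\omega(f,y)+(y-t)\omega(f,x)}{y-x}$ for $0\le t\le1$, $\widetilde{\omega}(f;t)=\omega(f,1)$ for $t>1$ (the least concave majorant of $\omega(f;\cdot)$). *)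

theory Defs
  imports "HOL-Analysis.Analysis"
begin

definition bernstein_int :: "nat \<Rightarrow> real \<Rightarrow> real \<Rightarrow> (real \<Rightarrow> real) \<Rightarrow> real \<Rightarrow> real" where
  "bernstein_int n a b f x =
     (1 / (b - a) ^ n) * (\<Sum>i=0..n. real (n choose i) * (x - a) ^ i * (b - x) ^ (n - i)
                                     * f (a + real i * (b - a) / real n))"

text \<open>Index k of the subinterval [(k-1)/m, k/m] containing x (at breakpoints the left one;
  the choice does not affect the integral).\<close>
definition piece_index :: "nat \<Rightarrow> real \<Rightarrow> nat" where
  "piece_index m x = max 1 (nat \<lceil>real m * x\<rceil>)"

definition piecewise_bernstein :: "nat \<Rightarrow> nat \<Rightarrow> (real \<Rightarrow> real) \<Rightarrow> real \<Rightarrow> real" where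
  "piecewise_bernstein n m f x =
     (let k = piece_index m x in
       bernstein_int n ((real k - 1) / real m) (real k / real m) f x)"

definition I_nm :: "nat \<Rightarrow> nat \<Rightarrow> (real \<Rightarrow> real) \<Rightarrow> real" where
  "I_nm n m f = integral {0..1} (piecewise_bernstein n m f)"

definition modcont :: "(real \<Rightarrow> real) \<Rightarrow> real \<Rightarrow> real" where
  "modcont f t = Sup {\<bar>f x - f y\<bar> | x y. x \<in> {0..1} \<and> y \<in> {0..1} \<and> \<bar>x - y\<bar> \<le> t}"

text \<open>Least concave majorant of the modulus of continuity.\<close>
definition modcont_tilde :: "(real \<Rightarrow> real) \<Rightarrow> real \<Rightarrow> real" where
  "modcont_tilde f t =
     (if t \<le> 1 then
        Sup {((t - x) * modcont f y + (y - t) * modcont f x) / (y - x) | x y.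
               0 \<le> x \<and> x \<le> t \<and> t \<le> y \<and> y \<le> 1 \<and> x \<noteq> y}
      else modcont f 1)"

end

theory Submission
  imports Defs
begin

text \<open>On each piece \<open>[k/m, (k+1)/m]\<close> every Bernstein basis polynomial has the same
  integral, so \<open>I_nm n m\<close> is the uniform mean over the \<open>m(n+1)\<close> nodes \<open>(k + i/n)/m\<close> and the
  left-hand side is a covariance, which Cauchy-Schwarz bounds by a product of standard
  deviations. The nodes have standard deviation \<open>\<sigma> = sqrt (1/12 + 1/(6m\<^sup>2n))\<close>. The concave
  majorant has a supporting line \<open>a + c d\<close> at \<open>2\<sigma>\<close>, so on the nodes \<open>f\<close> splits into a part
  that is \<open>c\<close>-Lipschitz in the node position (standard deviation at most \<open>c\<sigma>\<close>) and a part with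
  values in \<open>[0, a]\<close> (standard deviation at most \<open>a/2\<close>); hence the standard deviation of \<open>f\<close> on
  the nodes is at most \<open>(a + 2c\<sigma>)/2 = modcont_tilde f (2\<sigma>) / 2\<close>.\<close>

definition mean_on :: "'a set \<Rightarrow> ('a \<Rightarrow> real) \<Rightarrow> real" where
  "mean_on S h = (\<Sum>p\<in>S. h p) / real (card S)"

definition covar_on :: "'a set \<Rightarrow> ('a \<Rightarrow> real) \<Rightarrow> ('a \<Rightarrow> real) \<Rightarrow> real" where
  "covar_on S f g = mean_on S (\<lambda>p. f p * g p) - mean_on S f * mean_on S g"

definition stdev_on :: "'a set \<Rightarrow> ('a \<Rightarrow> real) \<Rightarrow> real" where
  "stdev_on S f = sqrt (covar_on S f f)"

lemma mean_on_scale: "mean_on S (\<lambda>p. c * h p) = c * mean_on S h"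
  by (simp add: mean_on_def sum_distrib_left)

lemma mean_on_add: "mean_on S (\<lambda>p. u p + v p) = mean_on S u + mean_on S v"
  by (simp add: mean_on_def sum.distrib add_divide_distrib)

lemma covar_on_scale: "covar_on S (\<lambda>p. c * f p) (\<lambda>p. d * g p) = c * d * covar_on S f g"
  by (simp add: covar_on_def mean_on_scale[symmetric] algebra_simps)

lemma mean_on_Times_mult:
  assumes "finite A" "finite B"
  shows "mean_on (A \<times> B) (\<lambda>z. h (fst z) * k (snd z)) = mean_on A h * mean_on B k"
proof -
  have "(\<Sum>z\<in>A \<times> B. h (fst z) * k (snd z)) = (\<Sum>a\<in>A. \<Sum>b\<in>B. h a * k b)"
    by (simp add: sum.cartesian_product split_beta)
  thus ?thesis by (simp add: mean_on_def sum_product card_cartesian_product)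
qed

lemma mean_on_Times_fst:
  assumes "finite A" "finite B" "B \<noteq> {}"
  shows "mean_on (A \<times> B) (\<lambda>z. h (fst z)) = mean_on A h"
  using mean_on_Times_mult[OF assms(1,2), of h "\<lambda>_. 1"] assms by (simp add: mean_on_def)

lemma mean_on_Times_snd:
  assumes "finite A" "finite B" "A \<noteq> {}"
  shows "mean_on (A \<times> B) (\<lambda>z. k (snd z)) = mean_on B k"
  using mean_on_Times_mult[OF assms(1,2), of "\<lambda>_. 1" k] assms by (simp add: mean_on_def)

lemma covar_on_Times_add:
  assumes "finite A" "finite B" "A \<noteq> {}" "B \<noteq> {}"
  shows "covar_on (A \<times> B) (\<lambda>z. f (fst z) + g (snd z)) (\<lambda>z. f (fst z) + g (snd z))
       = covar_on A f f + covar_on B g g"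
proof -
  have square: "(f (fst z) + g (snd z)) * (f (fst z) + g (snd z))
      = f (fst z) * f (fst z) + (2 * (f (fst z) * g (snd z)) + g (snd z) * g (snd z))" for z
    by (simp add: algebra_simps)
  show ?thesis
    unfolding covar_on_def square mean_on_add mean_on_scale
    using mean_on_Times_fst[OF assms(1,2,4), of f] mean_on_Times_snd[OF assms(1,2,3), of g]
      mean_on_Times_fst[OF assms(1,2,4), of "\<lambda>a. f a * f a"]
      mean_on_Times_snd[OF assms(1,2,3), of "\<lambda>b. g b * g b"]
      mean_on_Times_mult[OF assms(1,2), of f g]
    by (simp add: algebra_simps)
qed

lemma covar_on_lessThan_of_nat:
  assumes "0 < N"
  shows "covar_on {..<N} real real = (real N ^ 2 - 1) / 12"
proof -
  have sum: "(\<Sum>i<N. real i) = real N * (real N - 1) / 2"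
    by (induction N) (auto simp: field_simps)
  have sum_squares: "(\<Sum>i<N. real i * real i) = real N * (real N - 1) * (2 * real N - 1) / 6"
    by (induction N) (auto simp: field_simps)
  show ?thesis
    using assms unfolding covar_on_def mean_on_def sum sum_squares
    by (simp add: field_simps power2_eq_square)
qed

lemma covar_on_eq_pair_sum:
  assumes "finite S" "S \<noteq> {}"
  shows "covar_on S f g = (\<Sum>p\<in>S. \<Sum>q\<in>S. (f p - f q) * (g p - g q)) / (2 * real (card S) ^ 2)"
proof -
  define N where "N = real (card S)"
  define F where "F = (\<Sum>q\<in>S. f q)"
  define G where "G = (\<Sum>q\<in>S. g q)"
  define P where "P = (\<Sum>q\<in>S. f q * g q)"
  have "N > 0" using assms by (simp add: N_def card_gt_0_iff)
  have "(\<Sum>p\<in>S. \<Sum>q\<in>S. (f p - f q) * (g p - g q))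
      = (\<Sum>p\<in>S. \<Sum>q\<in>S. f p * g p + f q * g q - f p * g q - f q * g p)"
    by (intro sum.cong refl) (simp add: algebra_simps)
  also have "\<dots> = (\<Sum>p\<in>S. N * (f p * g p) + P - f p * G - g p * F)"
    by (simp add: sum.distrib sum_subtractf sum_distrib_left N_def mult.commute P_def F_def G_def)
  also have "\<dots> = 2 * N * P - 2 * F * G"
    by (simp add: sum.distrib sum_subtractf sum_distrib_left[symmetric] sum_distrib_right[symmetric]
        N_def P_def F_def G_def)
  finally have pairs: "(\<Sum>p\<in>S. \<Sum>q\<in>S. (f p - f q) * (g p - g q)) = 2 * N * P - 2 * F * G" .
  show ?thesis
    using \<open>N > 0\<close> unfolding pairs covar_on_def mean_on_def
    by (simp add: N_def[symmetric] F_def[symmetric] G_def[symmetric] P_def[symmetric]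
        field_simps power2_eq_square)
qed

lemma covar_on_self_nonneg:
  assumes "finite S" "S \<noteq> {}"
  shows "0 \<le> covar_on S f f"
  unfolding covar_on_eq_pair_sum[OF assms] by (intro divide_nonneg_nonneg sum_nonneg) (auto simp: zero_le_mult_iff)

lemma stdev_on_nonneg:
  assumes "finite S" "S \<noteq> {}"
  shows "0 \<le> stdev_on S f"
  using covar_on_self_nonneg[OF assms] by (simp add: stdev_on_def)

lemma abs_covar_on_le_stdev_on:
  assumes "finite S" "S \<noteq> {}"
  shows "\<bar>covar_on S f g\<bar> \<le> stdev_on S f * stdev_on S g"
proof -
  define D where "D = 2 * real (card S) ^ 2"
  have "D > 0" using assms by (simp add: D_def card_gt_0_iff)
  define df dg where "df = (\<lambda>z. f (fst z) - f (snd z))" and "dg = (\<lambda>z. g (fst z) - g (snd z))"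
  have pairs: "(\<Sum>p\<in>S. \<Sum>q\<in>S. h p q) = (\<Sum>z\<in>S \<times> S. h (fst z) (snd z))" for h :: "_ \<Rightarrow> _ \<Rightarrow> real"
    by (simp add: sum.cartesian_product split_beta)
  have "(\<Sum>z\<in>S \<times> S. df z * dg z)\<^sup>2 \<le> (\<Sum>z\<in>S \<times> S. (df z)\<^sup>2) * (\<Sum>z\<in>S \<times> S. (dg z)\<^sup>2)"
    by (rule Cauchy_Schwarz_ineq_sum)
  hence "(covar_on S f g)\<^sup>2 \<le> covar_on S f f * covar_on S g g"
    using \<open>D > 0\<close> unfolding covar_on_eq_pair_sum[OF assms] D_def[symmetric] pairs df_def dg_def
    by (simp add: power_divide power2_eq_square divide_right_mono)
  hence "sqrt ((covar_on S f g)\<^sup>2) \<le> sqrt (covar_on S f f * covar_on S g g)"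
    by (rule real_sqrt_le_mono)
  thus ?thesis by (simp add: stdev_on_def real_sqrt_mult)
qed

lemma stdev_on_add_le:
  assumes "finite S" "S \<noteq> {}"
  shows "stdev_on S (\<lambda>p. f p + g p) \<le> stdev_on S f + stdev_on S g"
proof -
  have expand: "covar_on S (\<lambda>p. f p + g p) (\<lambda>p. f p + g p)
      = covar_on S f f + 2 * covar_on S f g + covar_on S g g"
    by (simp add: covar_on_def mean_on_def sum.distrib sum_distrib_left algebra_simps
        add_divide_distrib diff_divide_distrib)
  have "covar_on S f g \<le> stdev_on S f * stdev_on S g"
    using abs_covar_on_le_stdev_on[OF assms, of f g] by linarith
  hence "covar_on S (\<lambda>p. f p + g p) (\<lambda>p. f p + g p) \<le> (stdev_on S f + stdev_on S g)\<^sup>2"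
    using covar_on_self_nonneg[OF assms, of f] covar_on_self_nonneg[OF assms, of g]
    unfolding expand power2_sum by (simp add: stdev_on_def)
  hence "stdev_on S (\<lambda>p. f p + g p) \<le> sqrt ((stdev_on S f + stdev_on S g)\<^sup>2)"
    unfolding stdev_on_def[of S "\<lambda>p. f p + g p"] by (rule real_sqrt_le_mono)
  also have "\<dots> = stdev_on S f + stdev_on S g"
    using stdev_on_nonneg[OF assms, of f] stdev_on_nonneg[OF assms, of g] by simp
  finally show ?thesis .
qed

lemma covar_on_self_le_range:
  assumes "finite S" "S \<noteq> {}" and range: "\<And>p. p \<in> S \<Longrightarrow> 0 \<le> u p \<and> u p \<le> a"
  shows "covar_on S u u \<le> a\<^sup>2 / 4"
proof -
  define w where "w = (\<lambda>p. u p - a / 2)"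
  have "real (card S) > 0" using assms by (simp add: card_gt_0_iff)
  have "covar_on S u u = covar_on S w w" by (simp add: covar_on_eq_pair_sum[OF assms(1,2)] w_def)
  also have "\<dots> \<le> mean_on S (\<lambda>p. w p * w p)" by (simp add: covar_on_def)
  also have "\<dots> \<le> mean_on S (\<lambda>_. a\<^sup>2 / 4)" unfolding mean_on_def
  proof (intro divide_right_mono sum_mono)
    fix p assume "p \<in> S"
    hence "\<bar>w p\<bar> \<le> a / 2" using range unfolding w_def by (auto split: abs_split)
    hence "\<bar>w p\<bar> * \<bar>w p\<bar> \<le> (a / 2) * (a / 2)" by (intro mult_mono) auto
    thus "w p * w p \<le> a\<^sup>2 / 4" by (simp add: power2_eq_square flip: abs_mult)
  qed simp
  also have "\<dots> = a\<^sup>2 / 4" using \<open>real (card S) > 0\<close> by (simp add: mean_on_def)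
  finally show ?thesis .
qed

lemma covar_on_self_le_Lipschitz:
  assumes "finite S" "S \<noteq> {}"
    and lip: "\<And>p q. p \<in> S \<Longrightarrow> q \<in> S \<Longrightarrow> \<bar>g p - g q\<bar> \<le> c * \<bar>x p - x q\<bar>"
  shows "covar_on S g g \<le> c\<^sup>2 * covar_on S x x"
proof -
  have "(g p - g q) * (g p - g q) \<le> c\<^sup>2 * ((x p - x q) * (x p - x q))" if "p \<in> S" "q \<in> S" for p q
  proof -
    have "\<bar>g p - g q\<bar> * \<bar>g p - g q\<bar> \<le> (c * \<bar>x p - x q\<bar>) * (c * \<bar>x p - x q\<bar>)"
      using lip[OF that] by (intro mult_mono) auto
    thus ?thesis by (simp add: power2_eq_square abs_mult_self algebra_simps flip: abs_mult)
  qed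
  hence "(\<Sum>p\<in>S. \<Sum>q\<in>S. (g p - g q) * (g p - g q))
      \<le> c\<^sup>2 * (\<Sum>p\<in>S. \<Sum>q\<in>S. (x p - x q) * (x p - x q))"
    unfolding sum_distrib_left by (intro sum_mono) auto
  thus ?thesis
    unfolding covar_on_eq_pair_sum[OF assms(1,2)] by (simp add: divide_right_mono)
qed

text \<open>The inf-convolution \<open>g p = min\<^sub>q (f q + c \<bar>x p - x q\<bar>)\<close> is the largest
  \<open>c\<close>-Lipschitz minorant of \<open>f\<close>, and the slack \<open>a\<close> bounds \<open>f - g\<close>.\<close>

lemma Lipschitz_plus_bounded_decomposition:
  fixes f x :: "'a \<Rightarrow> real"
  assumes "finite S" "S \<noteq> {}" "0 \<le> c"
    and modulus: "\<And>p q. p \<in> S \<Longrightarrow> q \<in> S \<Longrightarrow> \<bar>f p - f q\<bar> \<le> a + c * \<bar>x p - x q\<bar>"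
  obtains g u where "\<And>p. f p = g p + u p"
    and "\<And>p q. p \<in> S \<Longrightarrow> q \<in> S \<Longrightarrow> \<bar>g p - g q\<bar> \<le> c * \<bar>x p - x q\<bar>"
    and "\<And>p. p \<in> S \<Longrightarrow> 0 \<le> u p \<and> u p \<le> a"
proof
  define g where "g = (\<lambda>p. Min ((\<lambda>q. f q + c * \<bar>x p - x q\<bar>) ` S))"
  have g_le: "g p \<le> f q + c * \<bar>x p - x q\<bar>" if "q \<in> S" for p q
    unfolding g_def using assms(1) that by (intro Min_le) auto
  have g_attained: "\<exists>q\<in>S. g p = f q + c * \<bar>x p - x q\<bar>" for p
  proof -
    have "g p \<in> (\<lambda>q. f q + c * \<bar>x p - x q\<bar>) ` S" unfolding g_def using assms(1,2) by (intro Min_in) auto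
    thus ?thesis by auto
  qed
  have g_step: "g p \<le> g r + c * \<bar>x p - x r\<bar>" for p r
  proof -
    obtain q where q: "q \<in> S" "g r = f q + c * \<bar>x r - x q\<bar>" using g_attained by blast
    have "c * \<bar>x p - x q\<bar> \<le> c * (\<bar>x r - x q\<bar> + \<bar>x p - x r\<bar>)"
      using \<open>0 \<le> c\<close> by (intro mult_left_mono) auto
    thus ?thesis using g_le[OF q(1), of p] q(2) by (simp add: algebra_simps)
  qed
  show "\<bar>g p - g q\<bar> \<le> c * \<bar>x p - x q\<bar>" for p q
    using g_step[of p q] g_step[of q p] by (auto simp: abs_minus_commute split: abs_split)
  show "f p = g p + (f p - g p)" for p by simp
  show "0 \<le> f p - g p \<and> f p - g p \<le> a" if "p \<in> S" for p
  proof -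
    obtain q where q: "q \<in> S" "g p = f q + c * \<bar>x p - x q\<bar>" using g_attained by blast
    show ?thesis using g_le[OF that, of p] modulus[OF that q(1)] q(2) by auto
  qed
qed

lemma stdev_on_le_of_modulus:
  assumes S: "finite S" "S \<noteq> {}" and "0 \<le> a" "0 \<le> c"
    and modulus: "\<And>p q. p \<in> S \<Longrightarrow> q \<in> S \<Longrightarrow> \<bar>f p - f q\<bar> \<le> a + c * \<bar>x p - x q\<bar>"
  shows "stdev_on S f \<le> c * stdev_on S x + a / 2"
proof -
  obtain g u where split: "\<And>p. f p = g p + u p"
    and lip: "\<And>p q. p \<in> S \<Longrightarrow> q \<in> S \<Longrightarrow> \<bar>g p - g q\<bar> \<le> c * \<bar>x p - x q\<bar>"
    and range: "\<And>p. p \<in> S \<Longrightarrow> 0 \<le> u p \<and> u p \<le> a"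
    using Lipschitz_plus_bounded_decomposition[of S c f a x] S \<open>0 \<le> c\<close> modulus by metis
  have "f = (\<lambda>p. g p + u p)" using split by auto
  hence "stdev_on S f \<le> stdev_on S g + stdev_on S u" using stdev_on_add_le[OF S] by simp
  also have "stdev_on S g \<le> sqrt (c\<^sup>2 * covar_on S x x)"
    unfolding stdev_on_def by (rule real_sqrt_le_mono, rule covar_on_self_le_Lipschitz[OF S lip])
  also have "\<dots> = c * stdev_on S x" using \<open>0 \<le> c\<close> by (simp add: stdev_on_def real_sqrt_mult)
  also have "stdev_on S u \<le> sqrt (a\<^sup>2 / 4)"
    unfolding stdev_on_def by (rule real_sqrt_le_mono, rule covar_on_self_le_range[OF S range])
  also have "\<dots> = a / 2" using \<open>0 \<le> a\<close> by (simp add: real_sqrt_divide)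
  finally show ?thesis by simp
qed

lemma modcont_set_bdd_above:
  fixes f :: "real \<Rightarrow> real"
  assumes "continuous_on {0..1} f"
  shows "bdd_above {\<bar>f x - f y\<bar> | x y. x \<in> {0..1} \<and> y \<in> {0..1} \<and> \<bar>x - y\<bar> \<le> t}"
proof -
  have "bounded (f ` {0..1})"
    by (rule compact_imp_bounded[OF compact_continuous_image[OF assms compact_Icc]])
  then obtain B where "\<And>x. x \<in> {0..1} \<Longrightarrow> \<bar>f x\<bar> \<le> B"
    unfolding bounded_iff by (metis real_norm_def image_eqI)
  hence "\<And>x y. x \<in> {0..1} \<Longrightarrow> y \<in> {0..1} \<Longrightarrow> \<bar>f x - f y\<bar> \<le> 2 * B"
    by (metis abs_triangle_ineq4 add_mono mult_2 order_trans)
  thus ?thesis by (intro bdd_aboveI[of _ "2 * B"]) auto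
qed

lemma abs_diff_le_modcont:
  assumes "continuous_on {0..1} f" "x \<in> {0..1}" "y \<in> {0..1}" "\<bar>x - y\<bar> \<le> t"
  shows "\<bar>f x - f y\<bar> \<le> modcont f t"
  unfolding modcont_def using assms by (intro cSup_upper modcont_set_bdd_above) auto

lemma modcont_nonneg:
  assumes "continuous_on {0..1} f" "0 \<le> t"
  shows "0 \<le> modcont f t"
  using abs_diff_le_modcont[OF assms(1), of 0 0 t] assms(2) by simp

lemma modcont_mono:
  assumes "continuous_on {0..1} f" "0 \<le> s" "s \<le> t"
  shows "modcont f s \<le> modcont f t"
  unfolding modcont_def
proof (rule cSup_subset_mono)
  show "{\<bar>f x - f y\<bar> | x y. x \<in> {0..1} \<and> y \<in> {0..1} \<and> \<bar>x - y\<bar> \<le> s} \<noteq> {}"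
    using \<open>0 \<le> s\<close> by force
  show "bdd_above {\<bar>f x - f y\<bar> | x y. x \<in> {0..1} \<and> y \<in> {0..1} \<and> \<bar>x - y\<bar> \<le> t}"
    by (rule modcont_set_bdd_above[OF assms(1)])
qed (use \<open>s \<le> t\<close> in force)

lemma modcont_chord_le_modcont_tilde:
  assumes "continuous_on {0..1} f" "0 \<le> x" "x \<le> t" "t \<le> y" "y \<le> 1" "x < y"
  shows "(t - x) * modcont f y + (y - t) * modcont f x \<le> modcont_tilde f t * (y - x)"
proof -
  let ?w = "modcont f"
  define chords where "chords = {((t - x) * ?w y + (y - t) * ?w x) / (y - x) | x y.
      0 \<le> x \<and> x \<le> t \<and> t \<le> y \<and> y \<le> 1 \<and> x \<noteq> y}"
  have "bdd_above chords"
  proof (rule bdd_aboveI[of _ "?w 1"])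
    fix z assume "z \<in> chords"
    then obtain x y where xy: "z = ((t - x) * ?w y + (y - t) * ?w x) / (y - x)"
      "0 \<le> x" "x \<le> t" "t \<le> y" "y \<le> 1" "x \<noteq> y" unfolding chords_def by blast
    have "(t - x) * ?w y + (y - t) * ?w x \<le> (t - x) * ?w 1 + (y - t) * ?w 1"
      using xy by (intro add_mono mult_left_mono modcont_mono[OF assms(1)]) auto
    thus "z \<le> ?w 1" using xy by (simp add: divide_le_eq algebra_simps)
  qed
  hence "((t - x) * ?w y + (y - t) * ?w x) / (y - x) \<le> modcont_tilde f t"
    unfolding modcont_tilde_def chords_def using assms by (auto intro!: cSup_upper)
  thus ?thesis using \<open>x < y\<close> by (simp add: divide_le_eq)
qed

text \<open>The slope is the supremum of the slopes from \<open>(t, M)\<close> to the graph on the right of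
  \<open>t\<close>; the chord bound shows it is below every slope from the graph on the left.\<close>

lemma supporting_line_of_chord_bound:
  fixes w :: "real \<Rightarrow> real"
  assumes "0 < t" "t \<le> 1" and mono: "mono_on {0..1} w"
    and chord: "\<And>x y. 0 \<le> x \<Longrightarrow> x \<le> t \<Longrightarrow> t \<le> y \<Longrightarrow> y \<le> 1 \<Longrightarrow> x < y
        \<Longrightarrow> (t - x) * w y + (y - t) * w x \<le> M * (y - x)"
  obtains c where "0 \<le> c" "\<And>d. 0 \<le> d \<Longrightarrow> d \<le> 1 \<Longrightarrow> w d \<le> M + c * (d - t)"
proof -
  have "w t \<le> M" using chord[of 0 t] assms by simp
  hence left_le: "w d \<le> M" if "0 \<le> d" "d \<le> t" for d
    using mono_onD[OF mono, of d t] that assms by auto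
  have slopes: "(w s - M) / (s - t) \<le> (M - w d) / (t - d)" if "t < s" "s \<le> 1" "0 \<le> d" "d < t" for s d
  proof -
    have "(w s - M) * (t - d) \<le> (M - w d) * (s - t)"
      using chord[of d s] that by (simp add: algebra_simps)
    thus ?thesis using that by (simp add: divide_simps)
  qed
  define R where "R = insert 0 {(w s - M) / (s - t) | s. t < s \<and> s \<le> 1}"
  have R_bound: "r \<le> (M - w d) / (t - d)" if "r \<in> R" "0 \<le> d" "d < t" for r d
    using that slopes[of _ d] left_le[of d] by (auto simp: R_def)
  have "bdd_above R" using R_bound[of _ 0] \<open>0 < t\<close> by (intro bdd_aboveI) auto
  show ?thesis
  proof (rule that[of "Sup R"])
    show "0 \<le> Sup R" by (rule cSup_upper[OF _ \<open>bdd_above R\<close>]) (simp add: R_def)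
    show "w d \<le> M + Sup R * (d - t)" if "0 \<le> d" "d \<le> 1" for d
    proof (cases d t rule: linorder_cases)
      case less
      have "Sup R \<le> (M - w d) / (t - d)"
        by (rule cSup_least) (use R_bound that less in \<open>auto simp: R_def\<close>)
      thus ?thesis using less by (simp add: le_divide_eq algebra_simps)
    next
      case greater
      have "(w d - M) / (d - t) \<le> Sup R"
        by (rule cSup_upper[OF _ \<open>bdd_above R\<close>]) (use that greater in \<open>auto simp: R_def\<close>)
      thus ?thesis using greater by (simp add: divide_le_eq algebra_simps)
    qed (use \<open>w t \<le> M\<close> in simp)
  qed
qed

lemma stdev_on_comp_le_modcont_tilde:
  assumes S: "finite S" "S \<noteq> {}" and cont: "continuous_on {0..1} f"
    and unit: "\<And>p. p \<in> S \<Longrightarrow> x p \<in> {0..1}" and pos: "0 < stdev_on S x"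
  shows "stdev_on S (\<lambda>p. f (x p)) \<le> modcont_tilde f (2 * stdev_on S x) / 2"
proof -
  define t where "t = 2 * stdev_on S x"
  define M where "M = modcont_tilde f t"
  have "covar_on S x x \<le> 1\<^sup>2 / 4" using unit by (intro covar_on_self_le_range[OF S]) auto
  hence "stdev_on S x \<le> sqrt (1 / 4)" unfolding stdev_on_def by (intro real_sqrt_le_mono) simp
  hence "t \<le> 1" by (simp add: t_def real_sqrt_divide)
  moreover have "0 < t" using pos by (simp add: t_def)
  moreover have "mono_on {0..1} (modcont f)" by (intro mono_onI modcont_mono[OF cont]) auto
  ultimately obtain c where "0 \<le> c"
    and line: "\<And>d. 0 \<le> d \<Longrightarrow> d \<le> 1 \<Longrightarrow> modcont f d \<le> M + c * (d - t)"
    using supporting_line_of_chord_bound[of t "modcont f" M] modcont_chord_le_modcont_tilde[OF cont]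
    unfolding M_def by metis
  have "0 \<le> M - c * t" using line[of 0] modcont_nonneg[OF cont, of 0] by simp
  have "\<bar>f (x p) - f (x q)\<bar> \<le> (M - c * t) + c * \<bar>x p - x q\<bar>" if "p \<in> S" "q \<in> S" for p q
  proof -
    have "\<bar>f (x p) - f (x q)\<bar> \<le> modcont f \<bar>x p - x q\<bar>"
      using unit that by (intro abs_diff_le_modcont[OF cont]) auto
    also have "\<dots> \<le> M + c * (\<bar>x p - x q\<bar> - t)" using unit[OF that(1)] unit[OF that(2)] by (intro line) (auto simp: abs_le_iff)
    finally show ?thesis by (simp add: algebra_simps)
  qed
  hence "stdev_on S (\<lambda>p. f (x p)) \<le> c * stdev_on S x + (M - c * t) / 2"
    by (intro stdev_on_le_of_modulus[OF S \<open>0 \<le> M - c * t\<close> \<open>0 \<le> c\<close>])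
  thus ?thesis by (simp add: M_def t_def field_simps)
qed

lemma Bernstein_has_integral:
  assumes "k \<le> n"
  shows "(Bernstein n k has_integral 1 / real (Suc n)) {0..1}"
proof -
  have "((\<lambda>t. t powr (real k + 1 - 1) * (1 - t) powr (real (n - k) + 1 - 1))
      has_integral Beta (real k + 1) (real (n - k) + 1)) {0..1}"
    by (rule has_integral_Beta_real) auto
  moreover have "Beta (real k + 1) (real (n - k) + 1) = fact k * fact (n - k) / fact (Suc n)"
  proof -
    have "real k + 1 + (real (n - k) + 1) = 1 + real (Suc n)" using assms by simp
    thus ?thesis
      using Gamma_fact[of k, where 'a=real] Gamma_fact[of "n - k", where 'a=real]
        Gamma_fact[of "Suc n", where 'a=real]
      unfolding Beta_def by (simp add: add.commute)
  qed
  ultimately have powr_integral: "((\<lambda>t. t powr real k * (1 - t) powr real (n - k)) has_integral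
      fact k * fact (n - k) / fact (Suc n)) {0..1}"
    by simp
  have beta: "((\<lambda>t::real. t ^ k * (1 - t) ^ (n - k)) has_integral
      fact k * fact (n - k) / fact (Suc n)) {0..1}"
    by (rule has_integral_spike_finite[OF _ _ powr_integral, of "{0, 1}"]) (auto simp: powr_realpow)
  have "real (n choose k) * (fact k * fact (n - k) / fact (Suc n)) = 1 / real (Suc n)"
    using assms by (simp add: binomial_fact del: of_nat_Suc)
  thus ?thesis
    using has_integral_mult_right[OF beta, of "real (n choose k)"] by (simp add: Bernstein_def[abs_def] mult.assoc)
qed

lemma Bernstein_affine_has_integral:
  fixes a b :: real
  assumes "a < b" "k \<le> n"
  shows "((\<lambda>x. real (n choose k) * (x - a) ^ k * (b - x) ^ (n - k) / (b - a) ^ n)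
      has_integral (b - a) / real (Suc n)) {a..b}"
proof -
  define p where "p = (\<lambda>x. real (n choose k) * (x - a) ^ k * (b - x) ^ (n - k) / (b - a) ^ n)"
  have "b - a > 0" using assms by simp
  have "p ((b - a) *\<^sub>R u + a) = Bernstein n k u" for u
  proof -
    have "b - ((b - a) * u + a) = (b - a) * (1 - u)" by (simp add: algebra_simps)
    hence "p ((b - a) *\<^sub>R u + a)
        = real (n choose k) * ((b - a) * u) ^ k * ((b - a) * (1 - u)) ^ (n - k) / (b - a) ^ n"
      by (simp add: p_def)
    also have "\<dots> = Bernstein n k u * ((b - a) ^ k * (b - a) ^ (n - k) / (b - a) ^ n)"
      by (simp add: Bernstein_def power_mult_distrib)
    also have "(b - a) ^ k * (b - a) ^ (n - k) = (b - a) ^ n"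
      using assms(2) by (simp flip: power_add)
    finally show ?thesis using \<open>b - a > 0\<close> by simp
  qed
  hence "((\<lambda>u. p ((b - a) *\<^sub>R u + a)) has_integral ((b - a) / real (Suc n)) /\<^sub>R (b - a) ^ DIM(real))
      (cbox ((a - a) /\<^sub>R (b - a)) ((b - a) /\<^sub>R (b - a)))"
    using Bernstein_has_integral[OF assms(2)] \<open>b - a > 0\<close> by (simp add: cbox_interval)
  hence "(p has_integral (b - a) / real (Suc n)) (cbox a b)"
    using has_integral_affinity_iff[OF \<open>b - a > 0\<close>] by blast
  thus ?thesis by (simp add: p_def cbox_interval)
qed

lemma bernstein_int_has_integral:
  fixes a b :: real
  assumes "a < b"
  shows "(bernstein_int n a b h has_integral
           (b - a) / real (Suc n) * (\<Sum>i=0..n. h (a + real i * (b - a) / real n))) {a..b}"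
proof -
  have "bernstein_int n a b h = (\<lambda>x. \<Sum>i=0..n. h (a + real i * (b - a) / real n) *
      (real (n choose i) * (x - a) ^ i * (b - x) ^ (n - i) / (b - a) ^ n))"
    unfolding bernstein_int_def
    by (auto simp: sum_divide_distrib sum_distrib_left algebra_simps intro!: sum.cong)
  moreover have "((\<lambda>x. \<Sum>i=0..n. h (a + real i * (b - a) / real n) *
      (real (n choose i) * (x - a) ^ i * (b - x) ^ (n - i) / (b - a) ^ n)) has_integral
      (\<Sum>i=0..n. h (a + real i * (b - a) / real n) * ((b - a) / real (Suc n)))) {a..b}"
    by (intro has_integral_sum has_integral_mult_right Bernstein_affine_has_integral assms) auto
  ultimately show ?thesis by (simp add: sum_distrib_left sum_distrib_right mult.commute)
qed

text \<open>The nodes \<open>(k - 1)/m + i/(mn)\<close> of the paper, with \<open>k\<close> shifted to start at \<open>0\<close>.\<close>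

definition node :: "nat \<Rightarrow> nat \<Rightarrow> nat \<times> nat \<Rightarrow> real" where
  "node n m z = (real (fst z) + real (snd z) / real n) / real m"

lemma piecewise_bernstein_has_integral_piece:
  assumes "k < m"
  shows "(piecewise_bernstein n m h has_integral
           (\<Sum>i\<le>n. h (node n m (k, i))) / (real m * real (Suc n))) {real k / real m .. real (Suc k) / real m}"
proof -
  define a b where "a = real k / real m" and "b = real (Suc k) / real m"
  have "real m > 0" using assms by simp
  hence "a < b" by (simp add: a_def b_def divide_strict_right_mono)
  have piece: "piece_index m x = Suc k" if "a < x" "x \<le> b" for x
  proof -
    have "real k < real m * x" "real m * x \<le> real (Suc k)"
      using that \<open>real m > 0\<close> by (auto simp: a_def b_def field_simps)
    hence "\<lceil>real m * x\<rceil> = int (Suc k)" by (intro ceiling_unique) auto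
    thus ?thesis by (simp add: piece_index_def)
  qed
  have "(b - a) / real (Suc n) * (\<Sum>i=0..n. h (a + real i * (b - a) / real n))
      = (\<Sum>i\<le>n. h (node n m (k, i))) / (real m * real (Suc n))"
    using \<open>real m > 0\<close> by (simp add: a_def b_def node_def atMost_atLeast0 diff_divide_distrib add_divide_distrib mult.commute)
  moreover have "piecewise_bernstein n m h x = bernstein_int n a b h x" if "x \<in> {a..b} - {a}" for x
    using piece[of x] that by (simp add: piecewise_bernstein_def a_def b_def)
  ultimately show ?thesis
    using has_integral_spike_finite[OF _ _ bernstein_int_has_integral[OF \<open>a < b\<close>, of n h], of "{a}"]
    unfolding a_def b_def by auto
qed

lemma piecewise_bernstein_has_integral_initial:
  assumes "j \<le> m"
  shows "(piecewise_bernstein n m h has_integral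
           (\<Sum>k<j. \<Sum>i\<le>n. h (node n m (k, i))) / (real m * real (Suc n))) {0 .. real j / real m}"
  using assms
proof (induction j)
  case 0
  show ?case using has_integral_null_real[of 0 0] by simp
next
  case (Suc j)
  have "real j / real m \<le> real (Suc j) / real m" by (simp add: divide_right_mono)
  moreover have "0 \<le> real j / real m" by simp
  ultimately show ?case
    using has_integral_combine[OF _ _ Suc.IH piecewise_bernstein_has_integral_piece[of j m n h]] Suc.prems
    by (simp add: add_divide_distrib)
qed

lemma I_nm_eq_mean_on_nodes:
  assumes "1 \<le> m"
  shows "I_nm n m h = mean_on ({..<m} \<times> {..n}) (\<lambda>z. h (node n m z))"
proof -
  have "(\<Sum>k<m. \<Sum>i\<le>n. h (node n m (k, i))) = (\<Sum>z\<in>{..<m} \<times> {..n}. h (node n m z))"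
    by (simp add: sum.cartesian_product split_beta)
  thus ?thesis
    using piecewise_bernstein_has_integral_initial[of m m n h] assms
    by (simp add: I_nm_def integral_unique mean_on_def card_cartesian_product algebra_simps)
qed

lemma node_in_unit_interval:
  assumes "z \<in> {..<m} \<times> {..n}"
  shows "node n m z \<in> {0..1}"
proof -
  obtain k i where z: "z = (k, i)" "k < m" "i \<le> n" using assms by auto
  have "real i / real n \<le> 1" using z by (cases "n = 0") auto
  hence "real k + real i / real n \<le> real m" using z by linarith
  thus ?thesis using z by (simp add: node_def divide_le_eq)
qed

lemma covar_on_nodes:
  assumes "1 \<le> m" "1 \<le> n"
  shows "covar_on ({..<m} \<times> {..n}) (node n m) (node n m) = 1/12 + 1 / (6 * real m ^ 2 * real n)"
proof -
  define u v where "u = (\<lambda>k. 1 / real m * real k)" and "v = (\<lambda>i. 1 / (real m * real n) * real i)"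
  have "node n m = (\<lambda>z. u (fst z) + v (snd z))"
    by (simp add: fun_eq_iff node_def u_def v_def add_divide_distrib)
  hence "covar_on ({..<m} \<times> {..n}) (node n m) (node n m) = covar_on {..<m} u u + covar_on {..<Suc n} v v"
    using assms covar_on_Times_add[of "{..<m}" "{..n}" u v] by (simp add: lessThan_Suc_atMost lessThan_empty_iff)
  also have "\<dots> = (1 / real m)\<^sup>2 * covar_on {..<m} real real
      + (1 / (real m * real n))\<^sup>2 * covar_on {..<Suc n} real real"
    unfolding u_def v_def covar_on_scale by (simp add: power2_eq_square)
  also have "\<dots> = 1/12 + 1 / (6 * real m ^ 2 * real n)"
    using assms by (simp add: covar_on_lessThan_of_nat field_simps power2_eq_square)
  finally show ?thesis .
qed

theorem mainTheorem7:
  fixes n m :: nat and f g :: "real \<Rightarrow> real"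
  assumes "n \<ge> 1" and "m \<ge> 1"
    and "continuous_on {0..1} f" and "continuous_on {0..1} g"
  shows "\<bar>I_nm n m (\<lambda>x. f x * g x) - I_nm n m f * I_nm n m g\<bar>
         \<le> 1/4 * modcont_tilde f (2 * sqrt (1/12 + 1 / (6 * real m ^ 2 * real n)))
               * modcont_tilde g (2 * sqrt (1/12 + 1 / (6 * real m ^ 2 * real n)))"
proof -
  define S where "S = {..<m} \<times> {..n}"
  define \<sigma> where "\<sigma> = stdev_on S (node n m)"
  have S: "finite S" "S \<noteq> {}" using assms by (auto simp: S_def lessThan_empty_iff)
  have nodes: "\<And>z. z \<in> S \<Longrightarrow> node n m z \<in> {0..1}"
    unfolding S_def by (rule node_in_unit_interval)
  have \<sigma>_eq: "\<sigma> = sqrt (1/12 + 1 / (6 * real m ^ 2 * real n))"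
    using assms by (simp add: \<sigma>_def S_def stdev_on_def covar_on_nodes)
  hence "0 < \<sigma>" by (simp add: add_pos_nonneg)
  hence bound: "stdev_on S (\<lambda>z. h (node n m z)) \<le> modcont_tilde h (2 * \<sigma>) / 2"
    if "continuous_on {0..1} h" for h
    using stdev_on_comp_le_modcont_tilde[of S h "node n m"] S that nodes by (simp add: \<sigma>_def)
  have "\<bar>I_nm n m (\<lambda>x. f x * g x) - I_nm n m f * I_nm n m g\<bar>
      = \<bar>covar_on S (\<lambda>z. f (node n m z)) (\<lambda>z. g (node n m z))\<bar>"
    using assms by (simp add: I_nm_eq_mean_on_nodes covar_on_def S_def)
  also have "\<dots> \<le> stdev_on S (\<lambda>z. f (node n m z)) * stdev_on S (\<lambda>z. g (node n m z))"
    by (rule abs_covar_on_le_stdev_on[OF S])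
  also have "\<dots> \<le> (modcont_tilde f (2 * \<sigma>) / 2) * (modcont_tilde g (2 * \<sigma>) / 2)"
    using bound[OF assms(3)] bound[OF assms(4)] stdev_on_nonneg[OF S, of "\<lambda>z. f (node n m z)"]
      stdev_on_nonneg[OF S, of "\<lambda>z. g (node n m z)"]
    by (intro mult_mono) auto
  finally show ?thesis by (simp add: \<sigma>_eq)
qed

end
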